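(* Let $\mathbb{F}$ be a field, $\sigma=\mathrm{Id}$, and $\delta$ a derivation of $\mathbb{F}$ with field of constants $K=\{\beta\in\mathbb{F}:\delta(\beta)=0\}$, and assume $\dim_K(\mathbb{F})<\infty$. A vector $(a_1,\dots,a_r)\in\mathbb{F}^r$ is a $(\sigma,\delta)$-multiplicity sequence if and only if for each $i=1,\dots,r-1$ there exists $\beta_i\in\mathbb{F}^*$ with $$a_{i+1}-a_i=\delta(\beta_i)\beta_i^{-1}\quad\text{and}\quad\beta_i\notin\delta(\mathbb{F}).$$
   Context: $\mathbb{F}[x;\mathrm{Id},\delta]$ is the differential polynomial ring with $xa=ax+\delta(a)$. For $\mathbf a=(a_1,\dots,a_r)$, $P_{\mathbf a}=(x-a_r)\cdots(x-a_1)$; $\mathbf a$ is a $(\sigma,\delta)$-multiplicity sequence if $a_1$ is the only $b\in\mathbb{F}$ such that $x-b$ divides $P_{\mathbf a}$ on the right. *)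

theory Defs
  imports "HOL-Computational_Algebra.Polynomial"
begin

definition derivation :: "('a::field \<Rightarrow> 'a) \<Rightarrow> bool" where
  "derivation \<delta> \<longleftrightarrow> (\<forall>x y. \<delta> (x + y) = \<delta> x + \<delta> y) \<and>
                    (\<forall>x y. \<delta> (x * y) = \<delta> x * y + x * \<delta> y)"

definition fin_dim_over_constants :: "('a::field \<Rightarrow> 'a) \<Rightarrow> bool" where
  "fin_dim_over_constants \<delta> \<longleftrightarrow>
     (\<exists>B. finite B \<and> (\<forall>x. \<exists>c. (\<forall>b\<in>B. \<delta> (c b) = 0) \<and> x = (\<Sum>b\<in>B. c b * b)))"

text \<open>Elements of F[x;Id,delta] are represented by polynomials sum c_i x^i (coefficients
  on the left).  Left multiplication by x: x * (sum d_j x^j) = sum (d_j x^(j+1) + delta(d_j) x^j).\<close>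
definition dlmul_x :: "('a::field \<Rightarrow> 'a) \<Rightarrow> 'a poly \<Rightarrow> 'a poly" where
  "dlmul_x \<delta> p = pCons 0 p + map_poly \<delta> p"

definition dmult :: "('a::field \<Rightarrow> 'a) \<Rightarrow> 'a poly \<Rightarrow> 'a poly \<Rightarrow> 'a poly" where
  "dmult \<delta> p q = (\<Sum>i\<le>degree p. smult (coeff p i) ((dlmul_x \<delta> ^^ i) q))"

text \<open>P_a = (x - a_r) ... (x - a_1) for a = [a_1, ..., a_r].\<close>
definition P_seq :: "('a::field \<Rightarrow> 'a) \<Rightarrow> 'a list \<Rightarrow> 'a poly" where
  "P_seq \<delta> as = foldl (\<lambda>p a. dmult \<delta> [:- a, 1:] p) 1 as"

definition right_divides :: "('a::field \<Rightarrow> 'a) \<Rightarrow> 'a poly \<Rightarrow> 'a poly \<Rightarrow> bool" where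
  "right_divides \<delta> d p \<longleftrightarrow> (\<exists>q. p = dmult \<delta> q d)"

definition mult_seq :: "('a::field \<Rightarrow> 'a) \<Rightarrow> 'a list \<Rightarrow> bool" where
  "mult_seq \<delta> as \<longleftrightarrow> as \<noteq> [] \<and>
     (\<forall>b. right_divides \<delta> [:- b, 1:] (P_seq \<delta> as) \<longleftrightarrow> b = hd as)"

end

theory Submission
  imports Defs "Jordan_Normal_Form.Missing_VectorSpace"
begin

text \<open>Letting \<open>x\<close> act on \<open>F\<close> by \<open>u \<mapsto> \<delta> u + u b\<close> computes the remainder of right division by
  \<open>x - b\<close>; so \<open>x - b\<close> right-divides \<open>P\<^sub>a\<close> iff its remainder \<open>u\<close> vanishes, and appending \<open>a\<close> to
  the sequence multiplies a nonzero \<open>u\<close> by \<open>b + \<delta> u / u - a\<close>.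
  Call \<open>c\<close> shifted if \<open>c = \<gamma> + \<delta> \<gamma> / \<gamma>\<close> with \<open>\<gamma> \<noteq> 0\<close>, and non-exact if \<open>c = \<delta> \<beta> / \<beta>\<close> with
  \<open>\<beta> \<notin> \<delta>(F)\<close>. The two notions are exclusive, and finite dimensionality over the constants \<open>K\<close>
  makes them exhaustive: the \<open>K\<close>-linear map \<open>w \<mapsto> \<delta> w + c w\<close> is either onto or has a kernel,
  and \<open>\<delta>(F)\<close> has codimension one. Inductively, if all steps \<open>a\<^sub>i\<^sub>+\<^sub>1 - a\<^sub>i\<close> are non-exact, then
  as \<open>b \<noteq> a\<^sub>1\<close> varies the remainders stay nonzero and the residuals \<open>b + \<delta> u / u - a\<^sub>r\<close> run
  through exactly the shifted elements; hence appending \<open>a\<close> creates a new right root iff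
  \<open>a - a\<^sub>r\<close> is shifted, i.e. not non-exact.\<close>

lemma sum_atMost_degree_extend:
  fixes p :: "'a::zero poly"
  assumes "degree p \<le> n" and "\<And>i. f i 0 = 0"
  shows "(\<Sum>i\<le>degree p. f i (coeff p i)) = (\<Sum>i\<le>n. f i (coeff p i))"
  by (rule sum.mono_neutral_left) (use assms in \<open>auto simp: coeff_eq_0\<close>)

lemma successively_iff_nth:
  "successively P xs \<longleftrightarrow> (\<forall>i. i + 1 < length xs \<longrightarrow> P (xs ! i) (xs ! (i + 1)))"
proof (induction xs)
  case (Cons x xs)
  have "(\<forall>i. i + 1 < length (x # xs) \<longrightarrow> P ((x # xs) ! i) ((x # xs) ! (i + 1))) \<longleftrightarrow>
    (xs \<noteq> [] \<longrightarrow> P x (hd xs)) \<and> (\<forall>j. j + 1 < length xs \<longrightarrow> P (xs ! j) (xs ! (j + 1)))"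
    (is "(\<forall>i. ?Q i) \<longleftrightarrow> _")
  proof -
    have "(\<forall>i. ?Q i) \<longleftrightarrow> ?Q 0 \<and> (\<forall>j. ?Q (Suc j))" by (metis not0_implies_Suc)
    then show ?thesis by (cases xs) (auto simp: hd_conv_nth)
  qed
  then show ?case using Cons.IH by (auto simp: successively_Cons)
qed simp

section \<open>Linear algebra over a subfield\<close>

definition subfield_ring :: "'a::field set \<Rightarrow> 'a ring" where
  "subfield_ring K = \<lparr>carrier = K, monoid.mult = (*), one = 1, zero = 0, add = (+)\<rparr>"

definition field_as_module :: "'a::field set \<Rightarrow> ('a, 'a) module" where
  "field_as_module K = \<lparr>carrier = UNIV, monoid.mult = (*), one = 1, zero = 0, add = (+), smult = (*)\<rparr>"

lemma subfield_ring_simps [simp]: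
  "carrier (subfield_ring K) = K" "add (subfield_ring K) = (+)" "zero (subfield_ring K) = 0"
  "monoid.mult (subfield_ring K) = (*)" "one (subfield_ring K) = 1"
  by (simp_all add: subfield_ring_def)

lemma field_as_module_simps [simp]:
  "carrier (field_as_module K) = UNIV" "add (field_as_module K) = (+)"
  "zero (field_as_module K) = 0" "Module.module.smult (field_as_module K) = (*)"
  by (simp_all add: field_as_module_def)

locale subfield_set =
  fixes K :: "'a::field set"
  assumes zero_mem: "0 \<in> K" and one_mem: "1 \<in> K"
    and add_mem: "x \<in> K \<Longrightarrow> y \<in> K \<Longrightarrow> x + y \<in> K"
    and mult_mem: "x \<in> K \<Longrightarrow> y \<in> K \<Longrightarrow> x * y \<in> K"
    and uminus_mem: "x \<in> K \<Longrightarrow> - x \<in> K"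
    and inverse_mem: "x \<in> K \<Longrightarrow> inverse x \<in> K"
begin

lemma field_subfield_ring: "field (subfield_ring K)"
proof -
  have "\<exists>y\<in>K. x + y = 0" if "x \<in> K" for x
    using uminus_mem[OF that] by (intro bexI[of _ "- x"]) auto
  moreover have "\<exists>y\<in>K. x * y = 1" if "x \<in> K" "x \<noteq> 0" for x
    using inverse_mem[OF that(1)] that by (intro bexI[of _ "inverse x"]) auto
  ultimately show ?thesis
    unfolding subfield_ring_def using zero_mem one_mem add_mem mult_mem
    by unfold_locales (auto simp: algebra_simps Units_def)
qed

sublocale V: vectorspace "subfield_ring K" "field_as_module K"
proof -
  have "cring (subfield_ring K)"
    using field_subfield_ring by (simp add: field.axioms domain.axioms)
  moreover have "abelian_group (field_as_module K)"
    unfolding field_as_module_def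
    by unfold_locales (auto simp: algebra_simps Units_def, metis add.commute add.right_inverse)
  ultimately have "module (subfield_ring K) (field_as_module K)"
    by (rule moduleI) (simp_all add: algebra_simps)
  then show "vectorspace (subfield_ring K) (field_as_module K)"
    using field_subfield_ring by (simp add: vectorspace_def)
qed

lemma finsum_field_as_module: "finite A \<Longrightarrow> finsum (field_as_module K) f A = (\<Sum>v\<in>A. f v)"
  by (induction A rule: finite_induct) (simp_all add: V.M.finsum_insert)

lemma span_field_as_module:
  "V.span S = {(\<Sum>v\<in>A. a v * v) | a A. finite A \<and> A \<subseteq> S \<and> (\<forall>v\<in>A. a v \<in> K)}"
proof -
  have "V.lincomb a A = (\<Sum>v\<in>A. a v * v)" if "finite A" for a A
    unfolding V.lincomb_def using finsum_field_as_module[OF that] by simp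
  then show ?thesis
    unfolding V.span_def by (auto simp: Pi_def) metis+
qed

end

locale finite_dim_linear_endo = subfield_set K for K :: "'a::field set" +
  fixes B :: "'a set" and L :: "'a \<Rightarrow> 'a"
  assumes finite_B: "finite B"
    and spanning_B: "\<exists>c. (\<forall>b\<in>B. c b \<in> K) \<and> x = (\<Sum>b\<in>B. c b * b)"
    and additive: "L (x + y) = L x + L y"
    and homogeneous: "k \<in> K \<Longrightarrow> L (k * x) = k * L x"
begin

lemma fin_dim: V.fin_dim
  unfolding V.fin_dim_def
proof (intro exI[of _ B] conjI)
  show "V.gen_set B"
    unfolding span_field_as_module using finite_B spanning_B by fastforce
qed (use finite_B in auto)

sublocale endo: linear_map "subfield_ring K" "field_as_module K" "field_as_module K" L
  by unfold_locales (auto simp: module_hom_def additive homogeneous)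

sublocale image: vectorspace "subfield_ring K" "V.vs (range L)"
  using V.subspace_is_vs endo.imT_is_subspace by (simp add: endo.im_def)

sublocale onto_image: linear_map "subfield_ring K" "field_as_module K" "V.vs (range L)" L
  by unfold_locales (auto simp: module_hom_def additive homogeneous)

lemma range_basis:
  obtains C where "finite C" "C \<subseteq> range L" "\<not> V.lin_dep C" "V.span C = range L"
    "card C + vectorspace.dim (subfield_ring K) (V.vs {x. L x = 0}) = V.dim"
proof -
  have "image.fin_dim" using onto_image.rank_nullity_main(2)[OF fin_dim] by simp
  then obtain C where C: "finite C" "image.basis C" using image.finite_basis_exists by blast
  have sub: "C \<subseteq> range L" "submodule (subfield_ring K) (range L) (field_as_module K)"
    using C(2) endo.imT_is_subspace unfolding image.basis_def
    by (auto simp: endo.im_def subspace_def)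
  show thesis
  proof
    show "\<not> V.lin_dep C" "V.span C = range L"
      using C(2) V.span_li_not_depend[OF sub] unfolding image.basis_def by simp_all
    show "card C + vectorspace.dim (subfield_ring K) (V.vs {x. L x = 0}) = V.dim"
      using onto_image.rank_nullity[OF fin_dim] image.dim_basis[OF C]
      by (simp add: onto_image.im_def onto_image.ker_def)
  qed (use C(1) sub(1) in auto)
qed

lemma inj_imp_surj:
  assumes "inj L"
  shows "surj L"
proof -
  obtain C where C: "finite C" "C \<subseteq> range L" "\<not> V.lin_dep C" "V.span C = range L"
    "card C + vectorspace.dim (subfield_ring K) (V.vs {x. L x = 0}) = V.dim"
    by (rule range_basis)
  have "vectorspace.dim (subfield_ring K) (V.vs {x. L x = 0}) = 0"
    using onto_image.inj_imp_dim_ker0 assms unfolding onto_image.ker_def by (simp add: inj_on_def)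
  then have "V.basis C" using V.dim_li_is_basis[OF fin_dim C(1) _ C(3)] C(5) by simp
  then show ?thesis using C(4) unfolding V.basis_def by simp
qed

lemma range_complement_line:
  assumes ker: "{x. L x = 0} = K" and notin: "\<beta> \<notin> range L"
  shows "\<exists>k\<in>K. y - k * \<beta> \<in> range L"
proof -
  obtain C where C: "finite C" "C \<subseteq> range L" "\<not> V.lin_dep C" "V.span C = range L"
    "card C + vectorspace.dim (subfield_ring K) (V.vs {x. L x = 0}) = V.dim"
    by (rule range_basis)
  have subK: "subspace (subfield_ring K) K (field_as_module K)"
    using endo.kerT_is_subspace ker unfolding endo.ker_def by simp
  interpret constants: vectorspace "subfield_ring K" "V.vs K"
    using V.subspace_is_vs[OF subK] .
  have "V.span {1} = K"
    unfolding span_field_as_module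
  proof safe
    fix a and A :: "'a set"
    assume "finite A" "A \<subseteq> {1}" "\<forall>v\<in>A. a v \<in> K"
    then show "(\<Sum>v\<in>A. a v * v) \<in> K" using zero_mem by (cases "A = {}") (auto dest: subset_singletonD)
  next
    fix k assume "k \<in> K"
    then show "\<exists>a (A::'a set). k = (\<Sum>v\<in>A. a v * v) \<and> finite A \<and> A \<subseteq> {1} \<and> (\<forall>v\<in>A. a v \<in> K)"
      by (intro exI[of _ "\<lambda>_. k"] exI[of _ "{1}"]) auto
  qed
  then have "constants.gen_set {1}"
    using V.span_li_not_depend(1)[of "{1}" K] subK one_mem by (simp add: subspace_def)
  then have "constants.dim = 1" using constants.dim1I one_mem by simp
  moreover have beta_notin: "\<beta> \<notin> C" using C(2) notin by blast
  ultimately have card_C: "card (insert \<beta> C) = V.dim" using C(1,5) ker by simp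
  have "\<not> V.lin_dep (C \<union> {\<beta>})"
    using V.lin_dep_iff_in_span[of C \<beta>] C(3,4) notin beta_notin by simp
  then have "V.basis (insert \<beta> C)"
    by (intro V.dim_li_is_basis[OF fin_dim]) (use C(1) card_C in simp_all)
  then have "y \<in> V.span (insert \<beta> C)" unfolding V.basis_def by simp
  then obtain a A where A: "finite A" "A \<subseteq> insert \<beta> C" "\<forall>v\<in>A. a v \<in> K"
    and y: "y = (\<Sum>v\<in>A. a v * v)"
    unfolding span_field_as_module by blast
  define k where "k = (if \<beta> \<in> A then a \<beta> else 0)"
  have "y - k * \<beta> = (\<Sum>v\<in>A - {\<beta>}. a v * v)"
    unfolding y k_def using A(1) by (simp add: sum.remove)
  also have "\<dots> \<in> V.span C" unfolding span_field_as_module using A by blast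
  finally show ?thesis using C(4) A(3) zero_mem by (auto simp: k_def)
qed

end

section \<open>Derivations and logarithmic derivatives\<close>

locale field_derivation =
  fixes \<delta> :: "'a::field \<Rightarrow> 'a"
  assumes derivation: "derivation \<delta>"
begin

lemma deriv_add: "\<delta> (x + y) = \<delta> x + \<delta> y"
  using derivation unfolding derivation_def by blast

lemma deriv_mult: "\<delta> (x * y) = \<delta> x * y + x * \<delta> y"
  using derivation unfolding derivation_def by blast

lemma deriv_0 [simp]: "\<delta> 0 = 0"
  using deriv_add[of 0 0] by (metis add_cancel_right_right add_0)

lemma deriv_1 [simp]: "\<delta> 1 = 0"
  using deriv_mult[of 1 1] by (metis add_cancel_right_right mult_1 mult_1_right)

lemma deriv_minus: "\<delta> (- x) = - \<delta> x"
  using deriv_add[of x "- x"] by (simp add: eq_neg_iff_add_eq_0 add.commute)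

lemma deriv_diff: "\<delta> (x - y) = \<delta> x - \<delta> y"
  using deriv_add[of x "- y"] by (simp add: deriv_minus)

lemma deriv_inverse:
  assumes "x \<noteq> 0"
  shows "\<delta> (inverse x) = - \<delta> x * inverse x * inverse x"
proof -
  have "\<delta> x * inverse x + x * \<delta> (inverse x) = 0"
    using deriv_mult[of x "inverse x"] assms by simp
  then show ?thesis using assms by (simp add: field_simps eq_neg_iff_add_eq_0)
qed

sublocale constants: subfield_set "{c. \<delta> c = 0}"
proof
  show "inverse x \<in> {c. \<delta> c = 0}" if "x \<in> {c. \<delta> c = 0}" for x
    using that by (cases "x = 0") (simp_all add: deriv_inverse)
qed (simp_all add: deriv_add deriv_mult deriv_minus)

definition logderiv :: "'a \<Rightarrow> 'a" where
  "logderiv u = \<delta> u * inverse u"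

lemma deriv_eq_logderiv_mult: "x \<noteq> 0 \<Longrightarrow> \<delta> x = logderiv x * x"
  by (simp add: logderiv_def)

lemma logderiv_mult: "x \<noteq> 0 \<Longrightarrow> y \<noteq> 0 \<Longrightarrow> logderiv (x * y) = logderiv x + logderiv y"
  by (simp add: logderiv_def deriv_mult field_simps)

lemma logderiv_inverse:
  assumes "x \<noteq> 0"
  shows "logderiv (inverse x) = - logderiv x"
  unfolding logderiv_def deriv_inverse[OF assms] using assms by (simp add: field_simps)

lemma logderiv_divide: "x \<noteq> 0 \<Longrightarrow> y \<noteq> 0 \<Longrightarrow> logderiv (x / y) = logderiv x - logderiv y"
  by (simp add: divide_inverse logderiv_mult logderiv_inverse)

lemma logderiv_plus_logderiv_logderiv:
  assumes "\<delta> x \<noteq> 0"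
  shows "logderiv x + logderiv (logderiv x) = logderiv (\<delta> x)"
proof -
  have "x \<noteq> 0" using assms by auto
  have "logderiv x = \<delta> x / x" by (simp add: logderiv_def divide_inverse)
  then have "logderiv (logderiv x) = logderiv (\<delta> x) - logderiv x"
    using assms \<open>x \<noteq> 0\<close> by (simp add: logderiv_divide)
  then show ?thesis by simp
qed

definition shifted_logderiv :: "'a \<Rightarrow> bool" where
  "shifted_logderiv c \<longleftrightarrow> (\<exists>\<gamma>. \<gamma> \<noteq> 0 \<and> c = \<gamma> + logderiv \<gamma>)"

definition nonexact_logderiv :: "'a \<Rightarrow> bool" where
  "nonexact_logderiv c \<longleftrightarrow> (\<exists>\<beta>. \<beta> \<noteq> 0 \<and> c = logderiv \<beta> \<and> \<beta> \<notin> range \<delta>)"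

lemma shifted_logderiv_deriv:
  assumes "\<delta> \<eta> \<noteq> 0"
  shows "shifted_logderiv (logderiv (\<delta> \<eta>))"
proof -
  have "logderiv \<eta> \<noteq> 0" using assms by (auto simp: logderiv_def)
  then show ?thesis
    unfolding shifted_logderiv_def using logderiv_plus_logderiv_logderiv[OF assms] by metis
qed

lemma not_shifted_and_nonexact: "shifted_logderiv c \<Longrightarrow> \<not> nonexact_logderiv c"
proof
  assume "shifted_logderiv c" "nonexact_logderiv c"
  then obtain \<gamma> \<beta> where \<gamma>: "\<gamma> \<noteq> 0" "c = \<gamma> + logderiv \<gamma>"
    and \<beta>: "\<beta> \<noteq> 0" "c = logderiv \<beta>" "\<beta> \<notin> range \<delta>"
    unfolding shifted_logderiv_def nonexact_logderiv_def by blast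
  define \<eta> where "\<eta> = \<beta> / \<gamma>"
  have "\<eta> \<noteq> 0" using \<gamma> \<beta> by (simp add: \<eta>_def)
  moreover have "logderiv \<eta> = \<gamma>" using \<gamma> \<beta> by (simp add: \<eta>_def logderiv_divide)
  ultimately have "\<delta> \<eta> = \<beta>" using \<gamma>(1) by (simp add: deriv_eq_logderiv_mult \<eta>_def)
  with \<beta>(3) show False by (metis rangeI)
qed

end

section \<open>Right division by \<open>x - b\<close>\<close>

context field_derivation
begin

definition mult_x_mod :: "'a \<Rightarrow> 'a \<Rightarrow> 'a" where
  "mult_x_mod b u = \<delta> u + u * b"

definition right_rem :: "'a \<Rightarrow> 'a poly \<Rightarrow> 'a" where
  "right_rem b p = (\<Sum>i\<le>degree p. coeff p i * (mult_x_mod b ^^ i) 1)"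

lemma mult_x_mod_add: "mult_x_mod b (u + v) = mult_x_mod b u + mult_x_mod b v"
  by (simp add: mult_x_mod_def deriv_add algebra_simps)

lemma mult_x_mod_mult: "mult_x_mod b (d * u) = d * mult_x_mod b u + \<delta> d * u"
  by (simp add: mult_x_mod_def deriv_mult algebra_simps)

lemma mult_x_mod_0 [simp]: "mult_x_mod b 0 = 0"
  by (simp add: mult_x_mod_def)

lemma mult_x_mod_pow_0 [simp]: "(mult_x_mod b ^^ i) 0 = 0"
  by (induction i) simp_all

lemma mult_x_mod_sum: "mult_x_mod b (\<Sum>i\<in>A. f i) = (\<Sum>i\<in>A. mult_x_mod b (f i))"
  by (induction A rule: infinite_finite_induct) (simp_all add: mult_x_mod_add)

lemma right_rem_upto:
  "degree p \<le> n \<Longrightarrow> right_rem b p = (\<Sum>i\<le>n. coeff p i * (mult_x_mod b ^^ i) 1)"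
  unfolding right_rem_def by (rule sum_atMost_degree_extend) simp_all

lemma right_rem_0 [simp]: "right_rem b 0 = 0"
  by (simp add: right_rem_def)

lemma right_rem_add: "right_rem b (p + q) = right_rem b p + right_rem b q"
proof -
  let ?n = "max (degree p) (degree q)"
  have "degree (p + q) \<le> ?n" by (rule degree_add_le_max)
  then show ?thesis
    by (simp add: right_rem_upto[of _ ?n] sum.distrib algebra_simps)
qed

lemma right_rem_smult: "right_rem b (Polynomial.smult c p) = c * right_rem b p"
  by (simp add: right_rem_upto[OF degree_smult_le] right_rem_def sum_distrib_left mult.assoc)

lemma right_rem_sum: "right_rem b (\<Sum>i\<in>A. f i) = (\<Sum>i\<in>A. right_rem b (f i))"
  by (induction A rule: infinite_finite_induct) (simp_all add: right_rem_add)

lemma right_rem_const [simp]: "right_rem b [:r:] = r"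
  by (simp add: right_rem_def)

lemma right_rem_linear: "right_rem b [:- b, 1:] = 0"
  by (simp add: right_rem_def mult_x_mod_def)

lemma degree_map_deriv_le: "degree (map_poly \<delta> p) \<le> degree p"
  by (rule degree_le) (simp add: coeff_map_poly coeff_eq_0)

lemma right_rem_dlmul_x: "right_rem b (dlmul_x \<delta> p) = mult_x_mod b (right_rem b p)"
proof -
  let ?T = "mult_x_mod b" and ?n = "degree p"
  have "right_rem b (pCons 0 p) = (\<Sum>i\<le>Suc ?n. coeff (pCons 0 p) i * (?T ^^ i) 1)"
    by (rule right_rem_upto) (simp add: degree_pCons_le)
  also have "\<dots> = (\<Sum>i\<le>?n. coeff p i * ?T ((?T ^^ i) 1))"
    by (subst sum.atMost_Suc_shift) simp
  finally have shift: "right_rem b (pCons 0 p) = (\<Sum>i\<le>?n. coeff p i * ?T ((?T ^^ i) 1))" .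
  have deriv: "right_rem b (map_poly \<delta> p) = (\<Sum>i\<le>?n. \<delta> (coeff p i) * (?T ^^ i) 1)"
    by (simp add: right_rem_upto[OF degree_map_deriv_le] coeff_map_poly)
  have "mult_x_mod b (right_rem b p) =
    (\<Sum>i\<le>?n. coeff p i * ?T ((?T ^^ i) 1) + \<delta> (coeff p i) * (?T ^^ i) 1)"
    unfolding right_rem_def mult_x_mod_sum by (simp add: mult_x_mod_mult)
  then show ?thesis
    unfolding dlmul_x_def right_rem_add shift deriv by (simp add: sum.distrib)
qed

lemma right_rem_dlmul_x_pow: "right_rem b ((dlmul_x \<delta> ^^ i) p) = (mult_x_mod b ^^ i) (right_rem b p)"
  by (induction i) (simp_all add: right_rem_dlmul_x)

lemma right_rem_dmult:
  "right_rem b (dmult \<delta> q p) = (\<Sum>i\<le>degree q. coeff q i * (mult_x_mod b ^^ i) (right_rem b p))"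
  by (simp add: dmult_def right_rem_sum right_rem_smult right_rem_dlmul_x_pow)

lemma dmult_upto:
  "degree q \<le> n \<Longrightarrow> dmult \<delta> q p = (\<Sum>i\<le>n. Polynomial.smult (coeff q i) ((dlmul_x \<delta> ^^ i) p))"
  unfolding dmult_def by (rule sum_atMost_degree_extend) simp_all

lemma dmult_add_left: "dmult \<delta> (q1 + q2) p = dmult \<delta> q1 p + dmult \<delta> q2 p"
proof -
  let ?n = "max (degree q1) (degree q2)"
  have "degree (q1 + q2) \<le> ?n" by (rule degree_add_le_max)
  then show ?thesis by (simp add: dmult_upto[of _ ?n] sum.distrib smult_add_left)
qed

lemma dmult_monom: "dmult \<delta> (monom c n) p = Polynomial.smult c ((dlmul_x \<delta> ^^ n) p)"
proof -
  have "Polynomial.smult (coeff (monom c n) i) x = (if n = i then Polynomial.smult c x else 0)" for i x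
    by (simp add: coeff_monom)
  then show ?thesis by (simp add: dmult_upto[OF degree_monom_le])
qed

lemma degree_dlmul_x:
  assumes "p \<noteq> 0"
  shows "degree (dlmul_x \<delta> p) = Suc (degree p)" and "lead_coeff (dlmul_x \<delta> p) = lead_coeff p"
proof -
  have lead: "coeff (dlmul_x \<delta> p) (Suc (degree p)) = lead_coeff p"
    by (simp add: dlmul_x_def coeff_map_poly coeff_eq_0)
  have "degree (dlmul_x \<delta> p) \<le> Suc (degree p)"
    unfolding dlmul_x_def using degree_map_deriv_le[of p] degree_pCons_le[of 0 p]
    by (intro degree_add_le) auto
  moreover have "Suc (degree p) \<le> degree (dlmul_x \<delta> p)"
    using lead assms by (intro le_degree) simp
  ultimately show "degree (dlmul_x \<delta> p) = Suc (degree p)" by simp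
  with lead show "lead_coeff (dlmul_x \<delta> p) = lead_coeff p" by simp
qed

lemma monic_dlmul_x_pow_linear:
  shows "degree ((dlmul_x \<delta> ^^ n) [:- b, 1:]) = Suc n" and "lead_coeff ((dlmul_x \<delta> ^^ n) [:- b, 1:]) = 1"
proof (induction n)
  case (Suc n)
  let ?q = "(dlmul_x \<delta> ^^ n) [:- b, 1:]"
  have "?q \<noteq> 0" using Suc.IH(1) by auto
  note step = degree_dlmul_x[OF this]
  case 1 show ?case using step(1) Suc.IH(1) by simp
  case 2 show ?case using step(2) Suc.IH(2) by simp
qed simp_all

lemma right_division_by_linear: "\<exists>q r. p = dmult \<delta> q [:- b, 1:] + [:r:]"
proof (induction "degree p" arbitrary: p rule: less_induct)
  case less
  show ?case
  proof (cases "degree p")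
    case 0
    then have "p = dmult \<delta> 0 [:- b, 1:] + [:coeff p 0:]"
      by (simp add: dmult_def degree_0_id)
    then show ?thesis by blast
  next
    case (Suc n)
    define m where "m = (dlmul_x \<delta> ^^ n) [:- b, 1:]"
    define p' where "p' = p - Polynomial.smult (lead_coeff p) m"
    have deg_m: "degree m = Suc n" unfolding m_def by (rule monic_dlmul_x_pow_linear)
    have m: "degree m = Suc n" "coeff m (Suc n) = 1"
      using deg_m monic_dlmul_x_pow_linear(2)[of n b, folded m_def, unfolded deg_m] by simp_all
    have "degree p' \<le> n"
    proof (rule degree_le, intro allI impI)
      fix i assume "n < i"
      show "coeff p' i = 0"
      proof (cases "i = Suc n")
        case False
        with \<open>n < i\<close> have "Suc n < i" by simp
        then show ?thesis using Suc m by (simp add: p'_def coeff_eq_0)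
      qed (use Suc m in \<open>simp add: p'_def\<close>)
    qed
    then have "degree p' < degree p" using Suc by simp
    then obtain q r where qr: "p' = dmult \<delta> q [:- b, 1:] + [:r:]"
      using less by blast
    have "p = p' + Polynomial.smult (lead_coeff p) m" by (simp add: p'_def)
    also have "\<dots> = dmult \<delta> (q + monom (lead_coeff p) n) [:- b, 1:] + [:r:]"
      by (simp add: qr dmult_add_left dmult_monom m_def)
    finally show ?thesis by blast
  qed
qed

lemma right_divides_linear_iff: "right_divides \<delta> [:- b, 1:] p \<longleftrightarrow> right_rem b p = 0"
proof
  assume "right_divides \<delta> [:- b, 1:] p"
  then obtain q where "p = dmult \<delta> q [:- b, 1:]" unfolding right_divides_def by blast
  then show "right_rem b p = 0" by (simp add: right_rem_dmult right_rem_linear)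
next
  assume rem: "right_rem b p = 0"
  obtain q r where qr: "p = dmult \<delta> q [:- b, 1:] + [:r:]"
    using right_division_by_linear by blast
  then have "r = 0" using rem by (simp add: right_rem_add right_rem_dmult right_rem_linear)
  with qr show "right_divides \<delta> [:- b, 1:] p" unfolding right_divides_def by auto
qed

definition P_rem :: "'a \<Rightarrow> 'a list \<Rightarrow> 'a" where
  "P_rem b as = right_rem b (P_seq \<delta> as)"

lemma P_rem_Nil [simp]: "P_rem b [] = 1"
  by (simp add: P_rem_def P_seq_def one_pCons)

lemma P_rem_snoc: "P_rem b (as @ [a]) = \<delta> (P_rem b as) + P_rem b as * (b - a)"
  by (simp add: P_rem_def P_seq_def right_rem_dmult mult_x_mod_def algebra_simps)

lemma P_rem_snoc_logderiv:
  "P_rem b as \<noteq> 0 \<Longrightarrow> P_rem b (as @ [a]) = P_rem b as * (b + logderiv (P_rem b as) - a)"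
  by (simp add: P_rem_snoc logderiv_def algebra_simps)

lemma P_rem_append_eq_0: "P_rem b as = 0 \<Longrightarrow> P_rem b (as @ bs) = 0"
  by (induction bs rule: rev_induct) (simp_all add: P_rem_snoc flip: append_assoc)

lemma P_rem_hd: "as \<noteq> [] \<Longrightarrow> P_rem (hd as) as = 0"
proof -
  assume "as \<noteq> []"
  then obtain a rest where "as = [a] @ rest" by (cases as) auto
  moreover have "P_rem a [a] = 0" using P_rem_snoc[of a "[]" a] by simp
  ultimately show ?thesis using P_rem_append_eq_0[of a "[a]" rest] by simp
qed

lemma mult_seq_iff_P_rem:
  "as \<noteq> [] \<Longrightarrow> mult_seq \<delta> as \<longleftrightarrow> (\<forall>b. b \<noteq> hd as \<longrightarrow> P_rem b as \<noteq> 0)"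
  unfolding mult_seq_def right_divides_linear_iff P_rem_def[symmetric] using P_rem_hd by auto

abbreviation nonexact_steps :: "'a list \<Rightarrow> bool" where
  "nonexact_steps \<equiv> successively (\<lambda>a a'. nonexact_logderiv (a' - a))"

definition residual :: "'a \<Rightarrow> 'a list \<Rightarrow> 'a" where
  "residual b as = b + logderiv (P_rem b as) - last as"

lemma P_rem_snoc_residual:
  "P_rem b as \<noteq> 0 \<Longrightarrow> P_rem b (as @ [a]) = P_rem b as * (residual b as - (a - last as))"
  by (simp add: P_rem_snoc_logderiv residual_def)

lemma residual_snoc:
  assumes "P_rem b as \<noteq> 0" and "residual b as - (a - last as) \<noteq> 0"
  shows "residual b (as @ [a]) = (residual b as - (a - last as)) + logderiv (residual b as - (a - last as))"
proof -
  have "logderiv (P_rem b (as @ [a])) =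
    logderiv (P_rem b as) + logderiv (residual b as - (a - last as))"
    using assms by (simp add: P_rem_snoc_residual logderiv_mult)
  then show ?thesis by (simp add: residual_def algebra_simps)
qed

lemma residual_single: "residual b [a] = (b - a) + logderiv (b - a)"
  using P_rem_snoc[of b "[]" a] by (simp add: residual_def)

end

section \<open>Finite dimension over the constants\<close>

locale fin_dim_field_derivation = field_derivation +
  assumes fin_dim: "fin_dim_over_constants \<delta>"
begin

lemma linear_endo_over_constants:
  assumes "\<And>x y. L (x + y) = L x + L y" and "\<And>k x. \<delta> k = 0 \<Longrightarrow> L (k * x) = k * L x"
  obtains B where "finite_dim_linear_endo {c. \<delta> c = 0} B L"
proof -
  obtain B where B: "finite B" "\<forall>x. \<exists>c. (\<forall>b\<in>B. \<delta> (c b) = 0) \<and> x = (\<Sum>b\<in>B. c b * b)"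
    using fin_dim unfolding fin_dim_over_constants_def by blast
  have "finite_dim_linear_endo {c. \<delta> c = 0} B L"
  proof (intro finite_dim_linear_endo.intro finite_dim_linear_endo_axioms.intro)
    show "\<exists>c. (\<forall>b\<in>B. c b \<in> {c. \<delta> c = 0}) \<and> x = (\<Sum>b\<in>B. c b * b)" for x
      using B(2) by simp
  qed (use B(1) assms constants.subfield_set_axioms in simp_all)
  then show thesis by (rule that)
qed

lemma first_order_solvable_or_kernel:
  "(\<exists>w. \<delta> w + c * w = 1) \<or> (\<exists>y. y \<noteq> 0 \<and> \<delta> y + c * y = 0)"
proof -
  obtain B where "finite_dim_linear_endo {c. \<delta> c = 0} B (\<lambda>w. \<delta> w + c * w)"
    by (rule linear_endo_over_constants[of "\<lambda>w. \<delta> w + c * w"]) (simp_all add: deriv_add deriv_mult algebra_simps)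
  then interpret L: finite_dim_linear_endo "{c. \<delta> c = 0}" B "\<lambda>w. \<delta> w + c * w" .
  show ?thesis
  proof (cases "inj (\<lambda>w. \<delta> w + c * w)")
    case True
    then have "1 \<in> range (\<lambda>w. \<delta> w + c * w)" using L.inj_imp_surj by simp
    then obtain w where "1 = \<delta> w + c * w" by (rule imageE)
    then show ?thesis by (intro disjI1 exI[of _ w]) simp
  next
    case False
    then obtain x1 x2 where x: "x1 \<noteq> x2" "\<delta> x1 + c * x1 = \<delta> x2 + c * x2"
      unfolding inj_def by blast
    have "\<delta> (x1 - x2) + c * (x1 - x2) = (\<delta> x1 + c * x1) - (\<delta> x2 + c * x2)"
      by (simp add: deriv_diff right_diff_distrib)
    with x have "x1 - x2 \<noteq> 0 \<and> \<delta> (x1 - x2) + c * (x1 - x2) = 0" by simp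
    then show ?thesis by blast
  qed
qed

text \<open>The kernel of \<open>\<delta>\<close> is the line of constants, so \<open>\<delta>(F)\<close> has codimension one.\<close>
lemma range_deriv_complement:
  assumes "\<beta> \<notin> range \<delta>"
  shows "\<exists>k. \<delta> k = 0 \<and> y - k * \<beta> \<in> range \<delta>"
proof -
  obtain B where "finite_dim_linear_endo {c. \<delta> c = 0} B \<delta>"
    by (rule linear_endo_over_constants[of \<delta>]) (simp_all add: deriv_add deriv_mult)
  then interpret L: finite_dim_linear_endo "{c. \<delta> c = 0}" B \<delta> .
  show ?thesis using L.range_complement_line[OF refl assms] by blast
qed

lemma shifted_or_nonexact: "shifted_logderiv c \<or> nonexact_logderiv c"
  using first_order_solvable_or_kernel[of c]
proof
  assume "\<exists>w. \<delta> w + c * w = 1"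
  then obtain w where w: "\<delta> w + c * w = 1" by blast
  then have "w \<noteq> 0" by auto
  have "logderiv (inverse w) = - (\<delta> w * inverse w)"
    using logderiv_inverse[OF \<open>w \<noteq> 0\<close>] by (simp only: logderiv_def)
  moreover have "\<delta> w = 1 - c * w" using w by (simp add: algebra_simps)
  ultimately have "c = inverse w + logderiv (inverse w)"
    using \<open>w \<noteq> 0\<close> by (simp add: field_simps)
  then have "shifted_logderiv c"
    unfolding shifted_logderiv_def using \<open>w \<noteq> 0\<close> by (intro exI[of _ "inverse w"]) simp
  then show ?thesis ..
next
  assume "\<exists>y. y \<noteq> 0 \<and> \<delta> y + c * y = 0"
  then obtain y where y: "y \<noteq> 0" "\<delta> y + c * y = 0" by blast
  define \<beta> where "\<beta> = inverse y"
  have "\<beta> \<noteq> 0" using y by (simp add: \<beta>_def)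
  have "\<delta> y = - c * y" using y(2) by (simp add: eq_neg_iff_add_eq_0)
  moreover have "logderiv \<beta> = - (\<delta> y * inverse y)"
    using logderiv_inverse[OF y(1)] by (simp only: \<beta>_def logderiv_def)
  ultimately have c: "c = logderiv \<beta>" using y(1) by simp
  show ?thesis
  proof (cases "\<beta> \<in> range \<delta>")
    case True
    then obtain \<eta> where "\<beta> = \<delta> \<eta>" by blast
    then have "shifted_logderiv c" using shifted_logderiv_deriv \<open>\<beta> \<noteq> 0\<close> c by simp
    then show ?thesis ..
  next
    case False
    then have "nonexact_logderiv c"
      unfolding nonexact_logderiv_def using \<open>\<beta> \<noteq> 0\<close> c by blast
    then show ?thesis ..
  qed
qed

lemma shifted_logderiv_shift_witness:
  assumes d: "nonexact_logderiv d" and g: "shifted_logderiv g"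
  shows "\<exists>h. h \<noteq> 0 \<and> g = h + logderiv h \<and> shifted_logderiv (h + d)"
proof -
  obtain \<gamma> where \<gamma>: "\<gamma> \<noteq> 0" "g = \<gamma> + logderiv \<gamma>"
    using g unfolding shifted_logderiv_def by blast
  show ?thesis
  proof (cases "shifted_logderiv (\<gamma> + d)")
    case True
    with \<gamma> show ?thesis by blast
  next
    case False
    then obtain \<beta> where \<beta>: "\<beta> \<noteq> 0" "\<gamma> + d = logderiv \<beta>"
      using shifted_or_nonexact unfolding nonexact_logderiv_def by blast
    obtain \<beta>\<^sub>0 where \<beta>\<^sub>0: "\<beta>\<^sub>0 \<noteq> 0" "d = logderiv \<beta>\<^sub>0" "\<beta>\<^sub>0 \<notin> range \<delta>"
      using d unfolding nonexact_logderiv_def by blast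
    define \<mu> where "\<mu> = \<beta> / \<beta>\<^sub>0"
    have "\<mu> \<noteq> 0" using \<beta> \<beta>\<^sub>0 by (simp add: \<mu>_def)
    have "logderiv \<mu> = \<gamma>" using \<beta> \<beta>\<^sub>0 by (simp add: \<mu>_def logderiv_divide algebra_simps)
    then have "\<delta> \<mu> \<noteq> 0" using \<gamma>(1) \<open>\<mu> \<noteq> 0\<close> by (simp add: deriv_eq_logderiv_mult)
    have g_eq: "g = logderiv (\<delta> \<mu>)"
      using \<gamma>(2) logderiv_plus_logderiv_logderiv[OF \<open>\<delta> \<mu> \<noteq> 0\<close>] \<open>logderiv \<mu> = \<gamma>\<close> by simp
    obtain k where k: "\<delta> k = 0" "\<mu> * \<beta>\<^sub>0 - k * \<beta>\<^sub>0 \<in> range \<delta>"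
      using range_deriv_complement[OF \<beta>\<^sub>0(3)] by blast
    define \<nu> where "\<nu> = \<mu> - k"
    have "\<delta> \<nu> = \<delta> \<mu>" using k(1) by (simp add: \<nu>_def deriv_diff)
    then have "\<delta> \<nu> \<noteq> 0" "\<nu> \<noteq> 0" using \<open>\<delta> \<mu> \<noteq> 0\<close> by auto
    define h where "h = logderiv \<nu>"
    have "h \<noteq> 0" using \<open>\<delta> \<nu> \<noteq> 0\<close> \<open>\<nu> \<noteq> 0\<close> by (simp add: h_def logderiv_def)
    moreover have "g = h + logderiv h"
      using g_eq logderiv_plus_logderiv_logderiv[OF \<open>\<delta> \<nu> \<noteq> 0\<close>] \<open>\<delta> \<nu> = \<delta> \<mu>\<close>
      by (simp add: h_def)
    moreover have "shifted_logderiv (h + d)"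
    proof -
      obtain \<eta> where \<eta>: "\<nu> * \<beta>\<^sub>0 = \<delta> \<eta>"
        using k(2) by (auto simp: \<nu>_def algebra_simps)
      have "h + d = logderiv (\<nu> * \<beta>\<^sub>0)"
        using \<open>\<nu> \<noteq> 0\<close> \<beta>\<^sub>0 by (simp add: h_def logderiv_mult)
      moreover have "\<delta> \<eta> \<noteq> 0" using \<eta> \<open>\<nu> \<noteq> 0\<close> \<beta>\<^sub>0(1) by (metis no_zero_divisors)
      ultimately show ?thesis using shifted_logderiv_deriv \<eta> by simp
    qed
    ultimately show ?thesis by blast
  qed
qed

lemma P_rem_residual_invariant:
  assumes "as \<noteq> []" and "nonexact_steps as"
  shows "(\<forall>b. b \<noteq> hd as \<longrightarrow> P_rem b as \<noteq> 0) \<and>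
    (\<lambda>b. residual b as) ` {b. b \<noteq> hd as} = {g. shifted_logderiv g}"
  using assms
proof (induction as rule: rev_induct)
  case (snoc a as)
  show ?case
  proof (cases "as = []")
    case True
    have "P_rem b [a] = b - a" for b using P_rem_snoc[of b "[]" a] by simp
    moreover have "(\<lambda>b. residual b [a]) ` {b. b \<noteq> a} = {g. shifted_logderiv g}"
    proof (intro equalityI subsetI)
      fix g assume "g \<in> (\<lambda>b. residual b [a]) ` {b. b \<noteq> a}"
      then obtain b where "b \<noteq> a" "g = (b - a) + logderiv (b - a)"
        by (auto simp: residual_single)
      then show "g \<in> {g. shifted_logderiv g}"
        unfolding shifted_logderiv_def by (intro CollectI exI[of _ "b - a"]) simp
    next
      fix g assume "g \<in> {g. shifted_logderiv g}"
      then obtain \<gamma> where "\<gamma> \<noteq> 0" "g = \<gamma> + logderiv \<gamma>"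
        unfolding shifted_logderiv_def by blast
      then have b: "a + \<gamma> \<noteq> a" "g = residual (a + \<gamma>) [a]" by (simp_all add: residual_single)
      show "g \<in> (\<lambda>b. residual b [a]) ` {b. b \<noteq> a}" using b by (intro image_eqI[where x = "a + \<gamma>"]) simp_all
    qed
    ultimately show ?thesis using True by simp
  next
    case False
    let ?d = "a - last as"
    have IH: "\<forall>b. b \<noteq> hd as \<longrightarrow> P_rem b as \<noteq> 0"
      "(\<lambda>b. residual b as) ` {b. b \<noteq> hd as} = {g. shifted_logderiv g}"
      using snoc False by (simp_all add: successively_append_iff)
    have d: "nonexact_logderiv ?d" using snoc.prems False by (simp add: successively_append_iff)
    have step: "P_rem b (as @ [a]) \<noteq> 0 \<and>
        residual b (as @ [a]) = (residual b as - ?d) + logderiv (residual b as - ?d)"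
      if "b \<noteq> hd as" for b
    proof -
      have "shifted_logderiv (residual b as)" using IH(2) that by blast
      then have "residual b as - ?d \<noteq> 0" using d not_shifted_and_nonexact by auto
      moreover have "P_rem b as \<noteq> 0" using IH(1) that by blast
      ultimately show ?thesis by (simp add: P_rem_snoc_residual residual_snoc)
    qed
    have "(\<lambda>b. residual b (as @ [a])) ` {b. b \<noteq> hd as} = {g. shifted_logderiv g}"
    proof (intro equalityI subsetI)
      fix g assume "g \<in> (\<lambda>b. residual b (as @ [a])) ` {b. b \<noteq> hd as}"
      then obtain b where b: "b \<noteq> hd as" "g = residual b (as @ [a])" by (auto elim: imageE)
      have "shifted_logderiv (residual b as)" using IH(2) b(1) by blast
      then have "residual b as - ?d \<noteq> 0" using d not_shifted_and_nonexact by auto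
      moreover have "g = (residual b as - ?d) + logderiv (residual b as - ?d)"
        using step[OF b(1)] b(2) by simp
      ultimately show "g \<in> {g. shifted_logderiv g}"
        unfolding shifted_logderiv_def by (intro CollectI exI[of _ "residual b as - ?d"]) simp
    next
      fix g assume "g \<in> {g. shifted_logderiv g}"
      then obtain h where h: "h \<noteq> 0" "g = h + logderiv h" "shifted_logderiv (h + ?d)"
        using shifted_logderiv_shift_witness[OF d] by blast
      then have "h + ?d \<in> (\<lambda>b. residual b as) ` {b. b \<noteq> hd as}" using IH(2) by simp
      then obtain b where b: "b \<noteq> hd as" "h + ?d = residual b as" by (auto elim: imageE)
      then have "residual b as - ?d = h" by (simp add: algebra_simps)
      then have "g = residual b (as @ [a])" using step[OF b(1)] h(2) by simp
      then show "g \<in> (\<lambda>b. residual b (as @ [a])) ` {b. b \<noteq> hd as}"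
        using b(1) by (intro image_eqI[where x = b]) simp_all
    qed
    then show ?thesis using step False by simp
  qed
qed simp

lemma mult_seq_iff_nonexact_steps:
  assumes "as \<noteq> []"
  shows "mult_seq \<delta> as \<longleftrightarrow> nonexact_steps as"
proof
  assume "nonexact_steps as"
  then show "mult_seq \<delta> as"
    using P_rem_residual_invariant assms mult_seq_iff_P_rem by blast
next
  show "mult_seq \<delta> as \<Longrightarrow> nonexact_steps as"
    using assms
  proof (induction as rule: rev_induct)
    case (snoc a as)
    show ?case
    proof (cases "as = []")
      case False
      have hd: "hd (as @ [a]) = hd as" using False by simp
      have nonzero: "P_rem b as \<noteq> 0" if "b \<noteq> hd as" for b
        using snoc.prems(1) that P_rem_append_eq_0 mult_seq_iff_P_rem[of "as @ [a]"] hd by force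
      then have "nonexact_steps as" using snoc.IH False mult_seq_iff_P_rem by blast
      moreover have "nonexact_logderiv (a - last as)"
      proof (rule ccontr)
        assume "\<not> nonexact_logderiv (a - last as)"
        then have "a - last as \<in> (\<lambda>b. residual b as) ` {b. b \<noteq> hd as}"
          using shifted_or_nonexact P_rem_residual_invariant[OF False \<open>nonexact_steps as\<close>] by auto
        then obtain b where "b \<noteq> hd as" "a - last as = residual b as" by (auto elim: imageE)
        then have "b \<noteq> hd (as @ [a])" "P_rem b (as @ [a]) = 0"
          using nonzero hd by (simp_all add: P_rem_snoc_residual)
        then show False using snoc.prems(1) mult_seq_iff_P_rem[of "as @ [a]"] by simp
      qed
      ultimately show ?thesis using False by (simp add: successively_append_iff)
    qed simp
  qed simp
qed

end

theorem mainTheorem20: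
  fixes \<delta> :: "'a::field \<Rightarrow> 'a" and as :: "'a list"
  assumes "derivation \<delta>"
    and "fin_dim_over_constants \<delta>"
    and "as \<noteq> []"
  shows "mult_seq \<delta> as \<longleftrightarrow>
    (\<forall>i. i + 1 < length as \<longrightarrow>
       (\<exists>\<beta>. \<beta> \<noteq> 0 \<and> as ! (i + 1) - as ! i = \<delta> \<beta> * inverse \<beta> \<and> \<beta> \<notin> range \<delta>))"
proof -
  interpret fin_dim_field_derivation \<delta>
    using assms(1,2) by unfold_locales
  show ?thesis
    unfolding mult_seq_iff_nonexact_steps[OF assms(3)] successively_iff_nth
      nonexact_logderiv_def logderiv_def ..
qed

end
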